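(* Let $G$ be a graph containing a cycle, and let $k\ge 0$ and $r\le \log_2(g(G)-2)-1$. Then every graph in $M^k_r(G)$ is a tree.
   Context: $g(G)$ is the girth of $G$. Colors are red, blue, green. A $k$-precolored graph is a finite graph together with an assignment of colors to at most $k$ of its vertices. The game $\mathcal{G}^k_r(H)$ on a $k$-precolored graph $H$ starts from the given precoloring and lasts $r$ rounds; in each round Spoiler may erase the colors of some currently colored vertices and then selects a vertex, which Duplicator colors with one of the three colors; after each round at most $k$ vertices may be colored. Duplicator wins if the initial partial coloring and the partial coloring after each round are proper; otherwise Spoiler wins. A subgraph $H'$ of a $k$-precolored graph $H$ is a subgraph of the underlying graph in which every vertex colored in $H'$ has the same color in $H$; it is proper if $H'\ne H$ as precolored graphs. $M^k_r$ is the family of all $k$-precolored graphs $H$ such that Spoiler wins $\mathcal{G}^k_r(H)$ while Duplicator wins $\mathcal{G}^k_r(K)$ for every proper subgraph $K$ of $H$. $M^k_r(G)$ is the set of those members of $M^k_r$ whose underlying uncolored graph is isomorphic to a subgraph of $G$. *)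

theory Defs
  imports Complex_Main
begin

datatype color = Red | Blue | Green

definition is_graph :: "'v set \<Rightarrow> 'v set set \<Rightarrow> bool" where
  "is_graph V E \<longleftrightarrow> finite V \<and> (\<forall>e\<in>E. \<exists>u v. u \<noteq> v \<and> u \<in> V \<and> v \<in> V \<and> e = {u, v})"

definition is_walk :: "'v set set \<Rightarrow> 'v list \<Rightarrow> bool" where
  "is_walk E xs \<longleftrightarrow> xs \<noteq> [] \<and> (\<forall>i < length xs - 1. {xs ! i, xs ! (i + 1)} \<in> E)"

definition is_cycle :: "'v set set \<Rightarrow> 'v list \<Rightarrow> bool" where
  "is_cycle E xs \<longleftrightarrow> length xs \<ge> 3 \<and> distinct xs \<and> is_walk E xs \<and> {last xs, hd xs} \<in> E"

definition has_cycle :: "'v set \<Rightarrow> 'v set set \<Rightarrow> bool" where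
  "has_cycle V E \<longleftrightarrow> (\<exists>xs. set xs \<subseteq> V \<and> is_cycle E xs)"

definition girth :: "'v set \<Rightarrow> 'v set set \<Rightarrow> nat" where
  "girth V E = (LEAST n. \<exists>xs. set xs \<subseteq> V \<and> is_cycle E xs \<and> length xs = n)"

definition connected_graph :: "'v set \<Rightarrow> 'v set set \<Rightarrow> bool" where
  "connected_graph V E \<longleftrightarrow>
     (\<forall>u\<in>V. \<forall>v\<in>V. \<exists>xs. is_walk E xs \<and> set xs \<subseteq> V \<and> hd xs = u \<and> last xs = v)"

definition is_tree :: "'v set \<Rightarrow> 'v set set \<Rightarrow> bool" where
  "is_tree V E \<longleftrightarrow> V \<noteq> {} \<and> connected_graph V E \<and> \<not> has_cycle V E"

type_synonym 'v pcgraph = "'v set \<times> 'v set set \<times> ('v \<Rightarrow> color option)"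

definition precolored :: "nat \<Rightarrow> 'v pcgraph \<Rightarrow> bool" where
  "precolored k H \<longleftrightarrow> (case H of (V, E, c) \<Rightarrow> is_graph V E \<and> dom c \<subseteq> V \<and> card (dom c) \<le> k)"

definition proper_col :: "'v set set \<Rightarrow> ('v \<Rightarrow> color option) \<Rightarrow> bool" where
  "proper_col E c \<longleftrightarrow>
     (\<forall>u v. {u, v} \<in> E \<longrightarrow> u \<noteq> v \<longrightarrow> c u \<noteq> None \<longrightarrow> c v \<noteq> None \<longrightarrow> c u \<noteq> c v)"

text \<open>dwins V E k r c: Duplicator wins the game with r rounds remaining from partial colouring c.
  In a round Spoiler erases a set S of coloured vertices and selects a vertex v (such that at most
  k vertices are coloured afterwards); Duplicator colours v.\<close>
fun dwins :: "'v set \<Rightarrow> 'v set set \<Rightarrow> nat \<Rightarrow> nat \<Rightarrow> ('v \<Rightarrow> color option) \<Rightarrow> bool" where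
  "dwins V E k 0 c = proper_col E c"
| "dwins V E k (Suc r) c =
     (proper_col E c \<and>
      (\<forall>S v. S \<subseteq> dom c \<and> v \<in> V \<and> card ((dom c - S) \<union> {v}) \<le> k \<longrightarrow>
         (\<exists>col. dwins V E k r ((c |` (- S))(v \<mapsto> col)))))"

definition duplicator_wins :: "nat \<Rightarrow> nat \<Rightarrow> 'v pcgraph \<Rightarrow> bool" where
  "duplicator_wins k r H = (case H of (V, E, c) \<Rightarrow> dwins V E k r c)"

definition spoiler_wins :: "nat \<Rightarrow> nat \<Rightarrow> 'v pcgraph \<Rightarrow> bool" where
  "spoiler_wins k r H \<longleftrightarrow> \<not> duplicator_wins k r H"

definition pc_subgraph :: "'v pcgraph \<Rightarrow> 'v pcgraph \<Rightarrow> bool" where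
  "pc_subgraph K H \<longleftrightarrow> (case K of (V', E', c') \<Rightarrow> case H of (V, E, c) \<Rightarrow>
     is_graph V' E' \<and> dom c' \<subseteq> V' \<and> V' \<subseteq> V \<and> E' \<subseteq> E \<and> c' \<subseteq>\<^sub>m c)"

definition in_M :: "nat \<Rightarrow> nat \<Rightarrow> 'v pcgraph \<Rightarrow> bool" where
  "in_M k r H \<longleftrightarrow> precolored k H \<and> spoiler_wins k r H \<and>
     (\<forall>K. pc_subgraph K H \<and> K \<noteq> H \<longrightarrow> duplicator_wins k r K)"

definition iso_to_subgraph :: "'b set \<Rightarrow> 'b set set \<Rightarrow> 'a set \<Rightarrow> 'a set set \<Rightarrow> bool" where
  "iso_to_subgraph V E VG EG \<longleftrightarrow> (\<exists>f. inj_on f V \<and> f ` V \<subseteq> VG \<and> (\<forall>e\<in>E. f ` e \<in> EG))"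

definition in_M_of :: "nat \<Rightarrow> nat \<Rightarrow> 'a set \<Rightarrow> 'a set set \<Rightarrow> 'b pcgraph \<Rightarrow> bool" where
  "in_M_of k r VG EG H \<longleftrightarrow> in_M k r H \<and> (case H of (V, E, c) \<Rightarrow> iso_to_subgraph V E VG EG)"

end

theory Submission
  imports Defs
begin

text \<open>If Spoiler wins the r-round game, he already wins it on a subgraph of radius at most 2^r:
  by induction on r, the subgraphs won against the answers of Duplicator to Spoiler's first move
  all contain the selected vertex (or one of them suffices on its own), so their union has at most
  twice their radius. A graph in M^k_r is therefore connected of radius at most 2^r. Such a graph
  with a cycle has a cycle of length at most 2^(r+1) + 1, through a vertex farthest from the
  centre, and this is shorter than the girth of G.\<close>

section \<open>Walks and short cycles\<close>

lemma is_walk_iff_successively: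
  "is_walk E xs \<longleftrightarrow> xs \<noteq> [] \<and> successively (\<lambda>x y. {x, y} \<in> E) xs"
  unfolding is_walk_def successively_conv_nth by (auto simp: less_diff_conv)

lemma is_walk_rev [simp]: "is_walk E (rev xs) \<longleftrightarrow> is_walk E xs"
  by (simp add: is_walk_iff_successively insert_commute)

lemma is_walk_mono: "is_walk E xs \<Longrightarrow> E \<subseteq> E' \<Longrightarrow> is_walk E' xs"
  unfolding is_walk_def by auto

lemma is_walk_append:
  assumes "is_walk E xs" "is_walk E ys" "last xs = hd ys"
  shows "is_walk E (xs @ tl ys)" "hd (xs @ tl ys) = hd xs" "last (xs @ tl ys) = last ys"
proof -
  obtain y ys' where ys: "ys = y # ys'"
    using assms(2) by (cases ys) (auto simp: is_walk_def)
  have "xs \<noteq> []" using assms(1) by (simp add: is_walk_def)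
  then show "is_walk E (xs @ tl ys)" "hd (xs @ tl ys) = hd xs" "last (xs @ tl ys) = last ys"
    using assms unfolding ys is_walk_iff_successively
    by (auto simp: successively_append_iff successively_Cons)
qed

lemma is_walk_prefix: "is_walk E (xs @ ys) \<Longrightarrow> xs \<noteq> [] \<Longrightarrow> is_walk E xs"
  by (simp add: is_walk_iff_successively successively_append_iff)

lemma is_walk_shortcut:
  assumes "is_walk E xs" "\<not> distinct xs"
  obtains ys where "is_walk E ys" "hd ys = hd xs" "last ys = last xs" "length ys < length xs"
proof -
  obtain us w vs ws where xs: "xs = us @ [w] @ vs @ [w] @ ws"
    using not_distinct_decomp[OF assms(2)] by blast
  have "is_walk E (us @ [w] @ ws)"
    using assms(1) unfolding xs is_walk_iff_successively
    by (auto simp: successively_append_iff successively_Cons)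
  moreover have "hd (us @ [w] @ ws) = hd xs" "last (us @ [w] @ ws) = last xs"
    unfolding xs by (cases us; simp) (cases ws; simp)
  ultimately show ?thesis using that xs by simp
qed

lemma is_walk_in_vertices:
  assumes "is_graph V E" "is_walk E xs" "hd xs \<in> V"
  shows "set xs \<subseteq> V"
  using assms(2,3) unfolding is_walk_iff_successively
proof (induction xs)
  case (Cons x xs)
  have "hd xs \<in> V" if "xs \<noteq> []"
    using that Cons.prems assms(1) by (cases xs) (auto simp: is_graph_def doubleton_eq_iff)
  then show ?case using Cons by (cases xs) (auto simp: successively_Cons)
qed simp

lemma is_cycle_rotate1:
  assumes "is_cycle E xs" shows "is_cycle E (rotate1 xs)"
proof (cases xs)
  case (Cons x ys)
  then have "ys \<noteq> []" using assms by (auto simp: is_cycle_def)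
  then show ?thesis using assms Cons
    by (auto simp: is_cycle_def is_walk_iff_successively successively_append_iff
        successively_Cons insert_commute)
qed (use assms in \<open>simp add: is_cycle_def\<close>)

lemma is_cycle_rotate: "is_cycle E xs \<Longrightarrow> is_cycle E (rotate n xs)"
  by (induction n) (simp_all add: is_cycle_rotate1)

definition walk_dist :: "'v set set \<Rightarrow> 'v \<Rightarrow> 'v \<Rightarrow> nat" where
  "walk_dist E x z = (LEAST n. \<exists>xs. is_walk E xs \<and> hd xs = x \<and> last xs = z \<and> length xs = Suc n)"

lemma walk_dist_less:
  assumes "is_walk E xs" "hd xs = x" "last xs = z"
  shows "walk_dist E x z < length xs"
proof -
  have "length xs = Suc (length xs - 1)" using assms(1) by (simp add: is_walk_def)
  then have "walk_dist E x z \<le> length xs - 1"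
    unfolding walk_dist_def by (intro Least_le) (use assms in blast)
  then show ?thesis using assms(1) by (cases xs) (auto simp: is_walk_def)
qed

lemma shortest_walk:
  assumes "is_walk E xs" "hd xs = x" "last xs = z"
  obtains P where "is_walk E P" "distinct P" "hd P = x" "last P = z"
    "length P = Suc (walk_dist E x z)"
proof -
  have "\<exists>n xs. is_walk E xs \<and> hd xs = x \<and> last xs = z \<and> length xs = Suc n"
    using assms by (intro exI[of _ "length xs - 1"] exI[of _ xs]) (auto simp: is_walk_def)
  from LeastI_ex[OF this] obtain P
    where P: "is_walk E P" "hd P = x" "last P = z" "length P = Suc (walk_dist E x z)"
    unfolding walk_dist_def by blast
  have "distinct P"
  proof (rule ccontr)
    assume "\<not> distinct P"
    then obtain ys where "is_walk E ys" "hd ys = x" "last ys = z" "length ys < length P"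
      using is_walk_shortcut[OF P(1)] unfolding P(2,3) by blast
    then show False using walk_dist_less[of E ys x z] P(4) by simp
  qed
  then show ?thesis using that P by blast
qed

text \<open>Cut both paths at the first vertex of P that lies on Q.\<close>
lemma cycle_from_paths:
  assumes ab: "{a, b} \<in> E" "a \<noteq> b"
    and P: "is_walk E P" "distinct P" "hd P = a" "take 2 P \<noteq> [a, b]"
    and Q: "is_walk E Q" "distinct Q" "hd Q = b" "take 2 Q \<noteq> [b, a]"
    and PQ: "last P = last Q"
  obtains cs where "is_cycle E cs" "set cs \<subseteq> set P \<union> set Q" "length cs < length P + length Q"
proof -
  have "P \<noteq> []" "Q \<noteq> []" using P(1) Q(1) by (auto simp: is_walk_def)
  then have "\<exists>w\<in>set P. w \<in> set Q" using PQ by (metis last_in_set)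
  then obtain xs w ys where P_eq: "P = xs @ w # ys" and "w \<in> set Q"
    and first: "\<forall>y\<in>set xs. y \<notin> set Q"
    using split_list_first_prop[of P "\<lambda>w. w \<in> set Q"] by blast
  then obtain us vs where Q_eq: "Q = us @ w # vs" by (blast dest: split_list)
  define cs where "cs = xs @ w # rev us"
  have "distinct cs" using P(2) Q(2) first unfolding cs_def P_eq Q_eq by auto
  moreover have "is_walk E cs"
  proof -
    have "is_walk E (xs @ [w])" "is_walk E (us @ [w])"
      using P(1) Q(1) is_walk_prefix[of E "_ @ [w]"] unfolding P_eq Q_eq by auto
    then have "is_walk E (xs @ [w])" "is_walk E (rev (us @ [w]))"
      by (simp_all only: is_walk_rev)
    from is_walk_append(1)[OF this] show ?thesis unfolding cs_def by simp
  qed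
  moreover have "hd cs = a" using P(3) unfolding cs_def P_eq by (cases xs) auto
  moreover have "last cs = b" using Q(3) unfolding cs_def Q_eq by (cases us) (auto simp: last_rev)
  moreover have "length cs \<ge> 3"
  proof (rule ccontr)
    assume "\<not> 3 \<le> length cs"
    then have "length xs + length us \<le> 1" unfolding cs_def by simp
    then consider "xs = []" "us = []" | x where "xs = [x]" "us = []" | u where "xs = []" "us = [u]"
      by (cases xs; cases us) auto
    then show False
    proof cases
      case 1 then show False using ab(2) P(3) Q(3) by (simp add: P_eq Q_eq)
    next
      case 2 then show False using P(3,4) Q(3) by (simp add: P_eq Q_eq)
    next
      case 3 then show False using P(3) Q(3,4) by (simp add: P_eq Q_eq)
    qed
  qed
  ultimately have "is_cycle E cs" using ab(1) by (simp add: is_cycle_def insert_commute)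
  moreover have "set cs \<subseteq> set P \<union> set Q" "length cs < length P + length Q"
    unfolding cs_def P_eq Q_eq by auto
  ultimately show ?thesis using that by blast
qed

definition eccentricity_le :: "'v set \<Rightarrow> 'v set set \<Rightarrow> 'v \<Rightarrow> nat \<Rightarrow> bool" where
  "eccentricity_le V E z n \<longleftrightarrow>
     (\<forall>x\<in>V. \<exists>xs. is_walk E xs \<and> hd xs = x \<and> last xs = z \<and> length xs \<le> Suc n)"

lemma eccentricity_le_mono: "eccentricity_le V E z n \<Longrightarrow> n \<le> m \<Longrightarrow> eccentricity_le V E z m"
  unfolding eccentricity_le_def by (meson le_trans not_less_eq_eq)

lemma eccentricity_le_imp_connected:
  assumes "is_graph V E" "eccentricity_le V E z n"
  shows "connected_graph V E"
  unfolding connected_graph_def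
proof (intro ballI)
  fix u v assume "u \<in> V" "v \<in> V"
  then obtain xs ys where xs: "is_walk E xs" "hd xs = u" "last xs = z"
    and ys: "is_walk E ys" "hd ys = v" "last ys = z"
    using assms(2) unfolding eccentricity_le_def by blast
  have "last xs = hd (rev ys)" using xs(3) ys(3) by (simp add: hd_rev)
  note join = is_walk_append[OF xs(1) _ this]
  have "set (xs @ tl (rev ys)) \<subseteq> V"
    using is_walk_in_vertices[OF assms(1) join(1)] join(2) xs(2) \<open>u \<in> V\<close> ys(1) by simp
  then show "\<exists>ws. is_walk E ws \<and> set ws \<subseteq> V \<and> hd ws = u \<and> last ws = v"
    using join ys xs(2) by (intro exI[of _ "xs @ tl (rev ys)"]) (simp add: last_rev)
qed

lemma eccentricity_le_shortest_walk:
  assumes G: "is_graph V E" and ecc: "eccentricity_le V E z R" and "x \<in> V"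
  obtains P where "is_walk E P" "distinct P" "hd P = x" "last P = z"
    "length P = Suc (walk_dist E x z)" "walk_dist E x z \<le> R" "set P \<subseteq> V"
proof -
  obtain xs where xs: "is_walk E xs" "hd xs = x" "last xs = z" "length xs \<le> Suc R"
    using ecc \<open>x \<in> V\<close> unfolding eccentricity_le_def by blast
  obtain P where "is_walk E P" "distinct P" "hd P = x" "last P = z"
    "length P = Suc (walk_dist E x z)"
    using shortest_walk[OF xs(1-3)] by blast
  moreover have "walk_dist E x z \<le> R" using walk_dist_less[OF xs(1-3)] xs(4) by simp
  ultimately show ?thesis using that is_walk_in_vertices[OF G] \<open>x \<in> V\<close> by blast
qed

lemma cycle_neighbours:
  assumes cs: "is_cycle E cs" and "x \<in> set cs"
  obtains y w where "{x, y} \<in> E" "{x, w} \<in> E" "y \<noteq> w" "y \<in> set cs" "w \<in> set cs"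
proof -
  have ne: "cs \<noteq> []" using cs by (auto simp: is_cycle_def)
  obtain i where "i < length cs" "cs ! i = x" using \<open>x \<in> set cs\<close> by (meson in_set_conv_nth)
  then have "hd (rotate i cs) = x" using ne by (simp add: hd_rotate_conv_nth)
  moreover have rot: "is_cycle E (rotate i cs)" using is_cycle_rotate[OF cs] .
  moreover from rot have "length (rotate i cs) \<ge> 3" by (simp add: is_cycle_def)
  ultimately obtain y ys where eq: "rotate i cs = x # y # ys" and "ys \<noteq> []"
    by (metis Suc_le_length_iff list.sel(1) numeral_3_eq_3 length_0_conv not_less_eq_eq le0)
  have cyc: "is_cycle E (x # y # ys)" and set_eq: "set (x # y # ys) = set cs"
    using rot set_rotate[of i cs] unfolding eq by simp_all
  have "{x, y} \<in> E" using cyc by (simp add: is_cycle_def is_walk_iff_successively)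
  moreover have "{x, last ys} \<in> E"
    using cyc \<open>ys \<noteq> []\<close> by (simp add: is_cycle_def insert_commute)
  moreover have "y \<noteq> last ys" using cyc \<open>ys \<noteq> []\<close> by (auto simp: is_cycle_def)
  moreover have "y \<in> set cs" "last ys \<in> set cs"
    using set_eq last_in_set[OF \<open>ys \<noteq> []\<close>] by auto
  ultimately show ?thesis using that by blast
qed

text \<open>On a cycle, a vertex x farthest from the centre has two cycle neighbours; at least one of
  them, b, is not the successor of x on a shortest path, and x is not the successor of b either,
  because b is not farther than x.\<close>
lemma short_cycle:
  assumes G: "is_graph V E" and ecc: "eccentricity_le V E z R"
    and cs: "is_cycle E cs" "set cs \<subseteq> V"
  obtains cs' where "is_cycle E cs'" "set cs' \<subseteq> V" "length cs' \<le> 2 * R + 1"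
proof -
  define d where "d x = walk_dist E x z" for x
  have "cs \<noteq> []" using cs(1) by (auto simp: is_cycle_def)
  then have "Max (d ` set cs) \<in> d ` set cs" by simp
  then obtain x where x: "x \<in> set cs" and "d x = Max (d ` set cs)" by auto
  then have x_max: "d y \<le> d x" if "y \<in> set cs" for y using that by simp
  obtain Px where Px: "is_walk E Px" "distinct Px" "hd Px = x" "last Px = z"
    "length Px = Suc (d x)" "d x \<le> R" "set Px \<subseteq> V"
    using eccentricity_le_shortest_walk[OF G ecc] x cs(2) unfolding d_def by blast
  obtain y w where "{x, y} \<in> E" "{x, w} \<in> E" "y \<noteq> w" "y \<in> set cs" "w \<in> set cs"
    using cycle_neighbours[OF cs(1) x] .
  then obtain b where b: "b \<in> set cs" "{x, b} \<in> E" "take 2 Px \<noteq> [x, b]"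
    by (cases "take 2 Px = [x, y]") auto
  then have "b \<in> V" "x \<noteq> b" using cs(2) G by (auto simp: is_graph_def doubleton_eq_iff)
  then obtain Pb where Pb: "is_walk E Pb" "distinct Pb" "hd Pb = b" "last Pb = z"
    "length Pb = Suc (d b)" "d b \<le> R" "set Pb \<subseteq> V"
    using eccentricity_le_shortest_walk[OF G ecc] unfolding d_def by blast
  have "take 2 Pb \<noteq> [b, x]"
  proof
    assume "take 2 Pb = [b, x]"
    then obtain rest where Pb_eq: "Pb = b # x # rest"
      by (metis append_take_drop_id append_Cons append_Nil)
    then have "is_walk E (x # rest)"
      using Pb(1) by (simp add: is_walk_iff_successively successively_Cons)
    then have "d x < length (x # rest)"
      using walk_dist_less[of E "x # rest" x z] Pb(4) Pb_eq unfolding d_def by simp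
    then show False using x_max[OF b(1)] Pb(5) Pb_eq by simp
  qed
  moreover have "last Px = last Pb" using Px(4) Pb(4) by simp
  ultimately obtain cs' where "is_cycle E cs'" "set cs' \<subseteq> set Px \<union> set Pb"
    "length cs' < length Px + length Pb"
    using cycle_from_paths[OF b(2) \<open>x \<noteq> b\<close> Px(1-3) b(3) Pb(1-3)] by blast
  then show ?thesis using that Px Pb by fastforce
qed

section \<open>Spoiler wins on a ball of radius 2^r\<close>

lemma dwins_imp_proper_col: "dwins V E k r c \<Longrightarrow> proper_col E c"
  by (cases r) auto

lemma dwins_SucD:
  "dwins V E k (Suc r) c \<Longrightarrow> S \<subseteq> dom c \<Longrightarrow> v \<in> V \<Longrightarrow> card (dom c - S \<union> {v}) \<le> k \<Longrightarrow>
   \<exists>col. dwins V E k r ((c |` (- S))(v \<mapsto> col))"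
  by auto

lemma dwins_Suc_imp_dwins: "dwins V E k (Suc r) c \<Longrightarrow> dwins V E k r c"
proof (induction r arbitrary: c)
  case (Suc r)
  then show ?case
    unfolding dwins.simps(2)[of V E k r c]
    using dwins_imp_proper_col dwins_SucD[OF Suc.prems] by blast
qed simp

lemma proper_col_map_le: "proper_col E c \<Longrightarrow> c' \<subseteq>\<^sub>m c \<Longrightarrow> proper_col E c'"
  unfolding proper_col_def map_le_def by (metis domIff)

text \<open>A move from the smaller colouring is answered like the move from the larger one that
  additionally erases the extra colours.\<close>
lemma dwins_map_le: "dwins V E k r c \<Longrightarrow> c' \<subseteq>\<^sub>m c \<Longrightarrow> dwins V E k r c'"
proof (induction r arbitrary: c c')
  case 0
  then show ?case by (simp add: proper_col_map_le)
next
  case (Suc r)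
  have "\<exists>col. dwins V E k r ((c' |` (- S))(v \<mapsto> col))"
    if S: "S \<subseteq> dom c'" "v \<in> V" "card (dom c' - S \<union> {v}) \<le> k" for S v
  proof -
    define S' where "S' = S \<union> (dom c - dom c')"
    have "dom c' \<subseteq> dom c" using Suc.prems(2) by (rule map_le_implies_dom_le)
    then have "S' \<subseteq> dom c" "dom c - S' = dom c' - S" using S(1) unfolding S'_def by auto
    then obtain col where col: "dwins V E k r ((c |` (- S'))(v \<mapsto> col))"
      using dwins_SucD[OF Suc.prems(1)] S(2,3) by metis
    have "(c' |` (- S))(v \<mapsto> col) \<subseteq>\<^sub>m (c |` (- S'))(v \<mapsto> col)"
      using Suc.prems(2) unfolding map_le_def S'_def restrict_map_def
      by (auto simp: domIff split: if_splits) (metis domI option.distinct(1))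
    then show ?thesis using Suc.IH col by blast
  qed
  then show ?case
    using dwins_imp_proper_col[OF Suc.prems(1)] proper_col_map_le Suc.prems(2) by auto
qed

lemma dwins_subgraph:
  "dwins V E k r c \<Longrightarrow> V' \<subseteq> V \<Longrightarrow> E' \<subseteq> E \<Longrightarrow> dwins V' E' k r (c |` V')"
proof (induction r arbitrary: c)
  case 0
  then show ?case by (auto simp: proper_col_def restrict_map_def split: if_splits)
next
  case (Suc r)
  have "proper_col E' (c |` V')"
    using dwins_imp_proper_col[OF Suc.prems(1)] Suc.prems(3)
    by (auto simp: proper_col_def restrict_map_def split: if_splits)
  moreover have "\<exists>col. dwins V' E' k r ((c |` V' |` (- S))(v \<mapsto> col))"
    if S: "S \<subseteq> dom (c |` V')" "v \<in> V'" "card (dom (c |` V') - S \<union> {v}) \<le> k" for S v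
  proof -
    define S' where "S' = S \<union> (dom c - V')"
    have "S' \<subseteq> dom c" "v \<in> V" "dom c - S' = dom (c |` V') - S"
      using S(1,2) Suc.prems(2) unfolding S'_def by auto
    then obtain col where col: "dwins V E k r ((c |` (- S'))(v \<mapsto> col))"
      using dwins_SucD[OF Suc.prems(1)] S(3) by metis
    have "((c |` (- S'))(v \<mapsto> col)) |` V' = ((c |` V') |` (- S))(v \<mapsto> col)"
      using S(2) unfolding S'_def restrict_map_def by (auto simp: fun_eq_iff)
    then show ?thesis using Suc.IH[OF col Suc.prems(2,3)] by metis
  qed
  ultimately show ?case by auto
qed

definition spoiler_local_win ::
  "'v set \<Rightarrow> 'v set set \<Rightarrow> nat \<Rightarrow> nat \<Rightarrow> ('v \<Rightarrow> color option) \<Rightarrow> 'v set \<Rightarrow> 'v set set \<Rightarrow> 'v \<Rightarrow> bool"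
where
  "spoiler_local_win V E k r c W F z \<longleftrightarrow> W \<subseteq> V \<and> F \<subseteq> E \<and> (\<forall>e\<in>F. e \<subseteq> W) \<and> z \<in> W \<and>
     eccentricity_le W F z (2 ^ r) \<and> \<not> dwins W F k r (c |` W)"

lemma spoiler_local_win_edge:
  assumes "is_graph V E" "\<not> proper_col E c"
  shows "\<exists>W F z. spoiler_local_win V E k r c W F z"
proof -
  obtain u v where uv: "{u, v} \<in> E" "u \<noteq> v" "c u \<noteq> None" "c u = c v"
    using assms(2) unfolding proper_col_def by blast
  then have "u \<in> V" "v \<in> V" using assms(1) by (auto simp: is_graph_def doubleton_eq_iff)
  have "\<not> proper_col {{u, v}} (c |` {u, v})"
  proof
    assume "proper_col {{u, v}} (c |` {u, v})"
    from this[unfolded proper_col_def, rule_format, of u v] uv show False by simp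
  qed
  then have "\<not> dwins {u, v} {{u, v}} k r (c |` {u, v})" using dwins_imp_proper_col by blast
  moreover have "eccentricity_le {u, v} {{u, v}} u (2 ^ r)"
    unfolding eccentricity_le_def
  proof
    fix x assume "x \<in> {u, v}"
    moreover have "is_walk {{u, v}} [u]" "is_walk {{u, v}} [v, u]"
      by (simp_all add: is_walk_def insert_commute)
    ultimately show "\<exists>xs. is_walk {{u, v}} xs \<and> hd xs = x \<and> last xs = u \<and> length xs \<le> Suc (2 ^ r)"
      by (elim insertE) (force, force, simp)
  qed
  ultimately have "spoiler_local_win V E k r c {u, v} {{u, v}} u"
    using \<open>u \<in> V\<close> \<open>v \<in> V\<close> uv(1) by (simp add: spoiler_local_win_def)
  then show ?thesis by blast
qed

lemma spoiler_local_win_Suc: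
  assumes "spoiler_local_win V E k r c' W F z" "c' |` W \<subseteq>\<^sub>m c |` W"
  shows "spoiler_local_win V E k (Suc r) c W F z"
proof -
  have "\<not> dwins W F k r (c' |` W)" "eccentricity_le W F z (2 ^ r)"
    using assms(1) unfolding spoiler_local_win_def by blast+
  then have "\<not> dwins W F k (Suc r) (c |` W)" "eccentricity_le W F z (2 ^ Suc r)"
    using dwins_map_le[OF dwins_Suc_imp_dwins assms(2)] eccentricity_le_mono[of W F z "2 ^ r"]
    by (blast, simp)
  then show ?thesis using assms(1) unfolding spoiler_local_win_def by blast
qed

lemma eccentricity_le_UN:
  assumes "\<And>i. eccentricity_le (Wf i) (Ff i) (zf i) n" and "\<And>i. v \<in> Wf i"
  shows "eccentricity_le (\<Union>i. Wf i) (\<Union>i. Ff i) v (2 * n)"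
  unfolding eccentricity_le_def
proof
  fix x assume "x \<in> (\<Union>i. Wf i)"
  then obtain i where "x \<in> Wf i" by blast
  then obtain xs ys where xs: "is_walk (Ff i) xs" "hd xs = x" "last xs = zf i" "length xs \<le> Suc n"
    and ys: "is_walk (Ff i) ys" "hd ys = v" "last ys = zf i" "length ys \<le> Suc n"
    using assms unfolding eccentricity_le_def by meson
  have "last xs = hd (rev ys)" using xs(3) ys(3) by (simp add: hd_rev)
  note join = is_walk_append[OF xs(1) _ this]
  have "is_walk (\<Union>i. Ff i) (xs @ tl (rev ys))" using join(1) ys(1) by (auto intro: is_walk_mono)
  moreover have "length (xs @ tl (rev ys)) \<le> Suc (2 * n)" using xs(4) ys(4) by simp
  ultimately show "\<exists>ws. is_walk (\<Union>i. Ff i) ws \<and> hd ws = x \<and> last ws = v \<and> length ws \<le> Suc (2 * n)"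
    using join(2,3) xs(2) ys(1,2) by (intro exI[of _ "xs @ tl (rev ys)"]) (simp add: last_rev)
qed

lemma card_move_restrict:
  assumes "finite (dom c)" "card (dom c - S \<union> {v}) \<le> k"
  shows "card (dom (c |` W) - S \<inter> W \<union> {v}) \<le> k"
proof -
  have "dom (c |` W) - S \<inter> W \<union> {v} \<subseteq> dom c - S \<union> {v}" by auto
  then have "card (dom (c |` W) - S \<inter> W \<union> {v}) \<le> card (dom c - S \<union> {v})"
    using assms(1) by (intro card_mono) simp_all
  then show ?thesis using assms(2) by linarith
qed

lemma spoiler_local_win_UN:
  assumes G: "is_graph V E" "dom c \<subseteq> V" and move: "S \<subseteq> dom c" "v \<in> V" "card (dom c - S \<union> {v}) \<le> k"
    and win: "\<And>col. spoiler_local_win V E k r ((c |` (- S))(v \<mapsto> col)) (Wf col) (Ff col) (zf col)"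
    and v: "\<And>col. v \<in> Wf col"
  shows "spoiler_local_win V E k (Suc r) c (\<Union>col. Wf col) (\<Union>col. Ff col) v"
proof -
  define W where "W = (\<Union>col. Wf col)"
  define F where "F = (\<Union>col. Ff col)"
  have sub: "Wf col \<subseteq> W" "Ff col \<subseteq> F" for col unfolding W_def F_def by blast+
  have "eccentricity_le W F v (2 * 2 ^ r)"
    unfolding W_def F_def using win v by (intro eccentricity_le_UN) (auto simp: spoiler_local_win_def)
  moreover have "\<not> dwins W F k (Suc r) (c |` W)"
  proof
    assume d: "dwins W F k (Suc r) (c |` W)"
    have "finite (dom c)" using G by (meson finite_subset is_graph_def)
    then have "card (dom (c |` W) - S \<inter> W \<union> {v}) \<le> k"
      using move(3) by (rule card_move_restrict)
    moreover have "S \<inter> W \<subseteq> dom (c |` W)" "v \<in> W" using move(1) v sub by auto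
    ultimately obtain col where "dwins W F k r ((c |` W |` (- (S \<inter> W)))(v \<mapsto> col))"
      using dwins_SucD[OF d] by blast
    moreover have "(c |` W |` (- (S \<inter> W)))(v \<mapsto> col) = (c |` (- S))(v \<mapsto> col) |` W"
      using \<open>v \<in> W\<close> unfolding restrict_map_def by (auto simp: fun_eq_iff)
    ultimately have "dwins (Wf col) (Ff col) k r ((c |` (- S))(v \<mapsto> col) |` W |` Wf col)"
      using dwins_subgraph sub by metis
    moreover have "(c |` (- S))(v \<mapsto> col) |` W |` Wf col = (c |` (- S))(v \<mapsto> col) |` Wf col"
      by (simp only: restrict_restrict Int_absorb1[OF sub(1)])
    ultimately show False using win[of col] by (simp add: spoiler_local_win_def)
  qed
  moreover have "W \<subseteq> V" "F \<subseteq> E" "\<forall>e\<in>F. e \<subseteq> W" "v \<in> W"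
    using win v sub unfolding spoiler_local_win_def W_def F_def by (auto 0 0) blast+
  ultimately show ?thesis unfolding spoiler_local_win_def W_def F_def by simp
qed

lemma spoiler_local_win_exists:
  assumes G: "is_graph V E" and "dom c \<subseteq> V" "\<not> dwins V E k r c"
  shows "\<exists>W F z. spoiler_local_win V E k r c W F z"
  using assms(2,3)
proof (induction r arbitrary: c)
  case 0
  then show ?case using spoiler_local_win_edge[OF G] by simp
next
  case (Suc r)
  show ?case
  proof (cases "proper_col E c")
    case False
    then show ?thesis using spoiler_local_win_edge[OF G] by blast
  next
    case True
    then obtain S v where move: "S \<subseteq> dom c" "v \<in> V" "card (dom c - S \<union> {v}) \<le> k"
      and lose: "\<And>col. \<not> dwins V E k r ((c |` (- S))(v \<mapsto> col))"
      using Suc.prems(2) by auto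
    have "dom ((c |` (- S))(v \<mapsto> col)) \<subseteq> V" for col using Suc.prems(1) move(2) by auto
    then have "\<forall>col. \<exists>W F z. spoiler_local_win V E k r ((c |` (- S))(v \<mapsto> col)) W F z"
      using Suc.IH lose by blast
    then obtain Wf Ff zf
      where win: "\<And>col. spoiler_local_win V E k r ((c |` (- S))(v \<mapsto> col)) (Wf col) (Ff col) (zf col)"
      by metis
    show ?thesis
    proof (cases "\<exists>col. v \<notin> Wf col")
      case True
      then obtain col where "v \<notin> Wf col" by blast
      then have "(c |` (- S))(v \<mapsto> col) |` Wf col \<subseteq>\<^sub>m c |` Wf col"
        by (auto simp: map_le_def restrict_map_def)
      then show ?thesis using spoiler_local_win_Suc[OF win] by blast
    next
      case False
      then show ?thesis using spoiler_local_win_UN[OF G Suc.prems(1) move win] by blast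
    qed
  qed
qed

section \<open>Minimal graphs are trees\<close>

lemma in_MD:
  assumes "in_M k r (V, E, c)"
  shows "is_graph V E" "dom c \<subseteq> V" "\<not> dwins V E k r c"
    "\<And>K. pc_subgraph K (V, E, c) \<Longrightarrow> K \<noteq> (V, E, c) \<Longrightarrow> duplicator_wins k r K"
proof -
  have "precolored k (V, E, c)" "spoiler_wins k r (V, E, c)"
    and "\<And>K. pc_subgraph K (V, E, c) \<Longrightarrow> K \<noteq> (V, E, c) \<Longrightarrow> duplicator_wins k r K"
    using assms unfolding in_M_def by blast+
  then show "is_graph V E" "dom c \<subseteq> V" "\<not> dwins V E k r c"
    "\<And>K. pc_subgraph K (V, E, c) \<Longrightarrow> K \<noteq> (V, E, c) \<Longrightarrow> duplicator_wins k r K"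
    by (simp_all add: precolored_def spoiler_wins_def duplicator_wins_def)
qed

lemma in_M_local_win_whole:
  assumes M: "in_M k r (V, E, c)" and win: "spoiler_local_win V E k r c W F z"
  shows "W = V" "F = E"
proof -
  have W: "W \<subseteq> V" "F \<subseteq> E" "\<forall>e\<in>F. e \<subseteq> W" and lose: "\<not> dwins W F k r (c |` W)"
    using win unfolding spoiler_local_win_def by blast+
  have "is_graph W F"
    unfolding is_graph_def
  proof (intro conjI ballI)
    show "finite W" using in_MD(1)[OF M] W(1) finite_subset by (auto simp: is_graph_def)
    fix e assume "e \<in> F"
    then obtain u v where "u \<noteq> v" "e = {u, v}"
      using in_MD(1)[OF M] W(2) unfolding is_graph_def by blast
    then show "\<exists>u v. u \<noteq> v \<and> u \<in> W \<and> v \<in> W \<and> e = {u, v}" using W(3) \<open>e \<in> F\<close> by blast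
  qed
  then have "pc_subgraph (W, F, c |` W) (V, E, c)"
    using W(1,2) by (simp add: pc_subgraph_def map_le_def)
  moreover have "\<not> duplicator_wins k r (W, F, c |` W)"
    using lose by (simp add: duplicator_wins_def)
  ultimately have "(W, F, c |` W) = (V, E, c)" using in_MD(4)[OF M] by blast
  then show "W = V" "F = E" by simp_all
qed

lemma girth_le_cycle_image:
  assumes f: "inj_on f V" "f ` V \<subseteq> VG" "\<forall>e\<in>E. f ` e \<in> EG"
    and cs: "is_cycle E cs" "set cs \<subseteq> V"
  shows "girth VG EG \<le> length cs"
proof -
  have edge: "{f x, f y} \<in> EG" if "{x, y} \<in> E" for x y using f(3) that by fastforce
  have "is_walk EG (map f cs)"
    using cs(1) unfolding is_cycle_def is_walk_iff_successively successively_map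
    by (auto elim: successively_mono intro: edge)
  moreover have "distinct (map f cs)"
    using cs f(1) by (simp add: distinct_map is_cycle_def inj_on_subset)
  moreover have "{last (map f cs), hd (map f cs)} \<in> EG"
  proof -
    have "cs \<noteq> []" "{last cs, hd cs} \<in> E" using cs(1) by (auto simp: is_cycle_def)
    then show ?thesis using edge by (simp add: last_map hd_map)
  qed
  ultimately have "is_cycle EG (map f cs)" using cs(1) by (simp add: is_cycle_def)
  moreover have "set (map f cs) \<subseteq> VG" using cs(2) f(2) by auto
  ultimately show ?thesis unfolding girth_def by (intro Least_le) (metis length_map)
qed

lemma girth_ge_3:
  assumes "has_cycle V E"
  shows "3 \<le> girth V E"
proof -
  have "\<exists>xs. set xs \<subseteq> V \<and> is_cycle E xs \<and> length xs = girth V E"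
    unfolding girth_def by (rule LeastI_ex) (use assms in \<open>auto simp: has_cycle_def\<close>)
  then show ?thesis by (auto simp: is_cycle_def)
qed

lemma girth_bound_of_log:
  assumes "has_cycle V E" "real r \<le> log 2 (real (girth V E) - 2) - 1"
  shows "2 ^ Suc r + 2 \<le> girth V E"
proof -
  have "3 \<le> girth V E" using girth_ge_3[OF assms(1)] .
  then have "2 powr (real r + 1) \<le> real (girth V E) - 2"
    using assms(2) by (subst (asm) le_diff_eq, subst (asm) le_log_iff) auto
  also have "2 powr (real r + 1) = real (2 ^ Suc r)" by (simp add: powr_add powr_realpow)
  finally show ?thesis by linarith
qed

theorem lemma7:
  fixes VG :: "'a set" and EG :: "'a set set"
    and V :: "'b set" and E :: "'b set set" and c :: "'b \<Rightarrow> color option"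
    and k r :: nat
  assumes "is_graph VG EG"
    and "has_cycle VG EG"
    and "real r \<le> log 2 (real (girth VG EG) - 2) - 1"
    and "in_M_of k r VG EG (V, E, c)"
  shows "is_tree V E"
proof -
  have M: "in_M k r (V, E, c)" and "iso_to_subgraph V E VG EG"
    using assms(4) by (auto simp: in_M_of_def)
  then obtain f where f: "inj_on f V" "f ` V \<subseteq> VG" "\<forall>e\<in>E. f ` e \<in> EG"
    by (auto simp: iso_to_subgraph_def)
  obtain W F z where win: "spoiler_local_win V E k r c W F z"
    using spoiler_local_win_exists in_MD[OF M] by blast
  then have ecc: "eccentricity_le V E z (2 ^ r)" and "z \<in> V"
    using in_M_local_win_whole[OF M win] by (auto simp: spoiler_local_win_def)
  have "\<not> has_cycle V E"
  proof
    assume "has_cycle V E"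
    then obtain cs where "is_cycle E cs" "set cs \<subseteq> V" by (auto simp: has_cycle_def)
    then obtain cs' where "is_cycle E cs'" "set cs' \<subseteq> V" "length cs' \<le> 2 * 2 ^ r + 1"
      using short_cycle[OF in_MD(1)[OF M] ecc] by blast
    then show False
      using girth_le_cycle_image[OF f] girth_bound_of_log[OF assms(2,3)] by fastforce
  qed
  then show ?thesis
    using eccentricity_le_imp_connected[OF in_MD(1)[OF M] ecc] \<open>z \<in> V\<close> by (auto simp: is_tree_def)
qed

end
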